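(* Let $\nu\ge1/2$ and $b,\theta>0$ be fixed. As $\delta\to0$, $$\int_{-\pi}^{\pi}a^\delta_{b,\theta}(\lambda)\,d\lambda\sim(\delta\theta)^{\frac{2\nu}{2\nu+1}}(2\pi C_\nu b)^{\frac1{2\nu+1}}\int_{-\infty}^{\infty}\big(1+|x|^{2\nu+1}\big)^{-1}dx,$$ $$\int_{-\pi}^{\pi}\big[a^\delta_{b,\theta}(\lambda)\big]^2d\lambda\sim(\delta\theta)^{\frac{2\nu}{2\nu+1}}(2\pi C_\nu b)^{\frac1{2\nu+1}}\int_{-\infty}^{\infty}\big(1+|x|^{2\nu+1}\big)^{-2}dx.$$
   Context: For $\alpha>0$, $\omega\in\mathbb R$ let $g^*_{\nu,\alpha}(\omega)=C_\nu\alpha^{2\nu}(\alpha^2+\omega^2)^{-(\nu+1/2)}$ with $C_\nu=\Gamma(\nu+\frac12)/(\sqrt\pi\,\Gamma(\nu))$. For $\delta,\theta>0$ and $\lambda\in[-\pi,\pi]$ let $g^\delta_{\nu,\theta}(\lambda)=\sum_{k\in\mathbb Z}g^*_{\nu,\delta\theta}(\lambda+2k\pi)$, and for $b>0$, $a^\delta_{b,\theta}=\dfrac{b\,g^\delta_{\nu,\theta}}{b\,g^\delta_{\nu,\theta}+(2\pi)^{-1}}$. "$\sim$" means the ratio tends to $1$. *)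

theory Defs
  imports "HOL-Analysis.Analysis" "HOL-Library.Landau_Symbols"
begin

definition C_nu :: "real \<Rightarrow> real" where
  "C_nu \<nu> = Gamma (\<nu> + 1/2) / (sqrt pi * Gamma \<nu>)"

definition gstar :: "real \<Rightarrow> real \<Rightarrow> real \<Rightarrow> real" where
  "gstar \<nu> \<alpha> \<omega> = C_nu \<nu> * \<alpha> powr (2*\<nu>) * (\<alpha>^2 + \<omega>^2) powr (-(\<nu> + 1/2))"

definition gdelta :: "real \<Rightarrow> real \<Rightarrow> real \<Rightarrow> real \<Rightarrow> real" where
  "gdelta \<nu> \<delta> \<theta> l = (\<Sum>\<^sub>\<infinity>k\<in>(UNIV::int set). gstar \<nu> (\<delta>*\<theta>) (l + 2 * of_int k * pi))"

definition adelta :: "real \<Rightarrow> real \<Rightarrow> real \<Rightarrow> real \<Rightarrow> real \<Rightarrow> real" where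
  "adelta \<nu> \<delta> b \<theta> l = b * gdelta \<nu> \<delta> \<theta> l / (b * gdelta \<nu> \<delta> \<theta> l + 1 / (2*pi))"

end

theory Submission
  imports Defs "HOL-Probability.Sinc_Integral"
begin

(* Write alpha = delta*theta, p = 2 nu + 1, K = 2 pi C_nu b and phi(t) = t/(1+t), so that
   a^delta = phi(2 pi b g^delta).  The proof has five steps, developed in this order in the file.
   (1) Periodisation error: for |lambda| <= pi every term k ~= 0 of the periodised density
       is at most C_nu alpha^(2 nu) / k^2 (this uses nu >= 1/2), so g^delta exceeds its
       k = 0 term gstar by O(alpha^(2 nu)).
   (2) phi is increasing and 1-Lipschitz with values in [0,1]; hence the n-th moment
       int (a^delta)^n differs from int phi(2 pi b gstar)^n by O(alpha^(2 nu)).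
   (3) The substitution lambda = s x with s = (K alpha^(2 nu))^(1/p) turns
       phi(2 pi b gstar(lambda)) into the profile 1/(1 + (eps^2 + x^2)^(p/2)), eps = alpha/s,
       integrated over [-pi/s, pi/s].
   (4) As delta -> 0: s -> 0, eps -> 0 and alpha^(2 nu)/s -> 0.  Dominated convergence (the
       profile is at most 2/(1+x^2) since p >= 2) shows that the rescaled integrals tend to
       I_n = int_R (1 + |x|^p)^(-n) dx > 0.
   (5) A general relative-error principle gives  n-th moment ~ s * I_n,  and the theorem
       is the cases n = 1 and n = 2. *)

lemma C_nu_pos: "\<nu> > 0 \<Longrightarrow> C_nu \<nu> > 0"
  unfolding C_nu_def by (intro divide_pos_pos mult_pos_pos Gamma_real_pos) auto

lemma gstar_nonneg: "\<alpha> > 0 \<Longrightarrow> \<nu> > 0 \<Longrightarrow> gstar \<nu> \<alpha> \<omega> \<ge> 0"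
  unfolding gstar_def using C_nu_pos[of \<nu>] by auto

(* The series sum_{k in Z} 1/k^2 (the term k = 0 is 0 by convention) converges; its value
   is the constant in the periodisation error. *)

lemma summable_inv_sq_int: "(\<lambda>k::int. 1 / (of_int k)^2 :: real) summable_on UNIV"
proof -
  have nat: "(\<lambda>n::nat. 1 / (real n)^2) summable_on UNIV"
  proof -
    have "summable (\<lambda>n::nat. inverse (real n ^ 2))"
      by (rule inverse_power_summable) auto
    then show ?thesis
      by (subst summable_on_UNIV_nonneg_real_iff) (auto simp: divide_inverse)
  qed
  have U: "(UNIV::int set) = range int \<union> range (\<lambda>n. - int n)"
    by (auto simp: image_iff) (metis minus_minus nonneg_int_cases neg_0_le_iff_le linorder_le_cases)
  have pos: "(\<lambda>k::int. 1 / (of_int k)^2 :: real) summable_on range int"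
    by (subst summable_on_reindex) (auto simp: o_def nat)
  have neg: "(\<lambda>k::int. 1 / (of_int k)^2 :: real) summable_on range (\<lambda>n. - int n)"
    by (subst summable_on_reindex) (auto simp: o_def nat inj_on_def)
  show ?thesis unfolding U by (rule summable_on_union[OF pos neg])
qed

definition inv_sq_sum :: real where
  "inv_sq_sum = infsum (\<lambda>k::int. 1 / (of_int k)^2) UNIV"

(* An unordered sum over the integers is the limit of its symmetric partial sums; this
   exhibits the periodised density as a pointwise limit of continuous functions. *)

lemma infsum_int_symmetric_partial_sums:
  fixes f :: "int \<Rightarrow> 'a::{comm_monoid_add, t2_space}"
  assumes "f summable_on UNIV"
  shows "(\<lambda>N::nat. sum f {-int N..int N}) \<longlonglongrightarrow> infsum f UNIV"
proof -
  have intervals: "filterlim (\<lambda>N::nat. {-int N..int N}) (finite_subsets_at_top UNIV) sequentially"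
    unfolding filterlim_finite_subsets_at_top
  proof (safe, goal_cases)
    case (1 X)
    then obtain n where n: "\<forall>x\<in>X. \<bar>x\<bar> \<le> n"
      using finite_int_iff_bounded_le by (metis finite_imageI Max_ge image_eqI)
    show ?case using eventually_ge_at_top[of "nat n"]
      by eventually_elim (insert n, force)
  qed
  have "(sum f \<longlongrightarrow> infsum f UNIV) (finite_subsets_at_top UNIV)"
    using assms unfolding summable_iff_has_sum_infsum has_sum_def .
  from filterlim_compose[OF this intervals] show ?thesis by (simp add: o_def)
qed

(* For |lambda| <= pi and k ~= 0 we have |lambda + 2 k pi| >= |k| pi >= 1, so the k-th term of
   the periodised density is at most C_nu alpha^(2 nu) / k^2 once the exponent nu + 1/2 is
   at least 1. *)

lemma gstar_shifted_le:
  fixes \<nu> \<alpha> l :: real and k :: int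
  assumes nu: "\<nu> \<ge> 1/2" and a: "\<alpha> > 0" and l: "\<bar>l\<bar> \<le> pi" and k: "k \<noteq> 0"
  shows "gstar \<nu> \<alpha> (l + 2 * of_int k * pi) \<le> C_nu \<nu> * \<alpha> powr (2*\<nu>) * (1 / (of_int k)^2)"
proof -
  define \<omega> where "\<omega> = l + 2 * of_int k * pi"
  have k1: "\<bar>real_of_int k\<bar> \<ge> 1" using k by linarith
  have "\<bar>real_of_int k\<bar> * pi \<ge> 1 * pi" by (rule mult_right_mono) (use k1 in auto)
  moreover have "\<bar>2 * of_int k * pi\<bar> = 2 * (\<bar>real_of_int k\<bar> * pi)" by (simp add: abs_mult)
  ultimately have "\<bar>\<omega>\<bar> \<ge> \<bar>real_of_int k\<bar> * pi"
    unfolding \<omega>_def using l by linarith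
  moreover have "\<bar>real_of_int k\<bar> * pi \<ge> \<bar>real_of_int k\<bar> * 1"
    by (rule mult_left_mono) (use pi_gt3 in auto)
  ultimately have k_le_w: "\<bar>real_of_int k\<bar> \<le> \<bar>\<omega>\<bar>" by linarith
  then have sq: "(of_int k)^2 \<le> \<omega>^2"
    using power_mono[OF k_le_w, of 2] by simp
  have "1 \<le> \<bar>real_of_int k\<bar>^2" by (rule one_le_power[OF k1])
  then have w2: "\<omega>^2 \<ge> 1" using sq by simp
  have "(\<alpha>^2 + \<omega>^2) powr (-(\<nu>+1/2)) \<le> (\<omega>^2) powr (-(\<nu>+1/2))"
    by (rule powr_mono2') (use nu w2 in auto)
  also have "\<dots> \<le> (\<omega>^2) powr (-1)"
    by (rule powr_mono) (use nu w2 in auto)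
  also have "\<dots> = 1 / \<omega>^2" using w2 by (simp add: powr_minus divide_inverse)
  also have "\<dots> \<le> 1 / (of_int k)^2"
    by (rule divide_left_mono) (use sq k w2 in \<open>auto intro!: mult_pos_pos\<close>)
  finally have *: "(\<alpha>^2 + \<omega>^2) powr (-(\<nu>+1/2)) \<le> 1 / (of_int k)^2" .
  have c: "C_nu \<nu> * \<alpha> powr (2*\<nu>) \<ge> 0" using C_nu_pos[of \<nu>] nu by auto
  show ?thesis
    unfolding gstar_def \<omega>_def[symmetric]
    using mult_left_mono[OF * c] by (simp add: mult.assoc)
qed

lemma gdelta_bounds:
  fixes \<nu> \<delta> \<theta> l :: real
  assumes nu: "\<nu> \<ge> 1/2" and a: "\<delta>*\<theta> > 0" and l: "\<bar>l\<bar> \<le> pi"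
  shows "(\<lambda>k::int. gstar \<nu> (\<delta>*\<theta>) (l + 2 * of_int k * pi)) summable_on UNIV"
    and "gstar \<nu> (\<delta>*\<theta>) l \<le> gdelta \<nu> \<delta> \<theta> l"
    and "gdelta \<nu> \<delta> \<theta> l \<le> gstar \<nu> (\<delta>*\<theta>) l + C_nu \<nu> * (\<delta>*\<theta>) powr (2*\<nu>) * inv_sq_sum"
proof -
  define \<alpha> where "\<alpha> = \<delta>*\<theta>"
  have a': "\<alpha> > 0" using a \<alpha>_def by simp
  define f where "f = (\<lambda>k::int. gstar \<nu> \<alpha> (l + 2 * of_int k * pi))"
  define c where "c = C_nu \<nu> * \<alpha> powr (2*\<nu>)"
  define centre where "centre = (\<lambda>k::int. if k = 0 then gstar \<nu> \<alpha> l else 0)"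
  define tail where "tail = (\<lambda>k::int. c * (1 / (of_int k)^2))"
  have centre_sum: "centre summable_on UNIV"
    unfolding centre_def by (rule finite_nonzero_values_imp_summable_on) auto
  have tail_sum: "tail summable_on UNIV"
    unfolding tail_def by (rule summable_on_cmult_right[OF summable_inv_sq_int])
  have majorant_sum: "(\<lambda>k. centre k + tail k) summable_on UNIV"
    by (rule summable_on_add[OF centre_sum tail_sum])
  have f_le: "f k \<le> centre k + tail k" for k
    using gstar_shifted_le[OF nu a' l, of k]
    by (cases "k = 0") (simp_all add: f_def centre_def tail_def c_def)
  have f_nonneg: "f k \<ge> 0" for k unfolding f_def using gstar_nonneg[OF a'] nu by auto
  have f_sum: "f summable_on UNIV"
    by (rule summable_on_comparison_test[OF majorant_sum]) (use f_le f_nonneg in auto)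
  then show "(\<lambda>k::int. gstar \<nu> (\<delta>*\<theta>) (l + 2 * of_int k * pi)) summable_on UNIV"
    by (simp add: f_def \<alpha>_def)
  have gd: "gdelta \<nu> \<delta> \<theta> l = infsum f UNIV" by (simp add: gdelta_def f_def \<alpha>_def)
  have "sum f {0} \<le> infsum f UNIV"
    by (rule finite_sum_le_infsum[OF f_sum]) (use f_nonneg in auto)
  then show "gstar \<nu> (\<delta>*\<theta>) l \<le> gdelta \<nu> \<delta> \<theta> l" by (simp add: gd f_def \<alpha>_def)
  have "infsum f UNIV \<le> infsum (\<lambda>k. centre k + tail k) UNIV"
    by (rule infsum_mono[OF f_sum majorant_sum f_le])
  also have "\<dots> = infsum centre UNIV + infsum tail UNIV"
    by (rule infsum_add[OF centre_sum tail_sum])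
  also have "infsum centre UNIV = infsum centre {0}"
    by (rule infsum_cong_neutral) (auto simp: centre_def)
  also have "infsum tail UNIV = c * inv_sq_sum"
    unfolding tail_def inv_sq_sum_def by (rule infsum_cmult_right[OF summable_inv_sq_int])
  finally show "gdelta \<nu> \<delta> \<theta> l \<le> gstar \<nu> (\<delta>*\<theta>) l + C_nu \<nu> * (\<delta>*\<theta>) powr (2*\<nu>) * inv_sq_sum"
    by (simp add: gd c_def \<alpha>_def centre_def)
qed

lemma gdelta_measurable:
  assumes nu: "\<nu> \<ge> 1/2" and a: "\<delta>*\<theta> > 0"
  shows "gdelta \<nu> \<delta> \<theta> \<in> borel_measurable (lebesgue_on {-pi..pi})"
proof (rule borel_measurable_LIMSEQ_real)
  fix x assume "x \<in> space (lebesgue_on {-pi..pi})"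
  then have "\<bar>x\<bar> \<le> pi" by auto
  from infsum_int_symmetric_partial_sums[OF gdelta_bounds(1)[OF nu a this]]
  show "(\<lambda>N. \<Sum>k\<in>{-int N..int N}. gstar \<nu> (\<delta>*\<theta>) (x + 2 * of_int k * pi)) \<longlonglongrightarrow> gdelta \<nu> \<delta> \<theta> x"
    by (simp add: gdelta_def)
next
  fix N :: nat
  show "(\<lambda>x. \<Sum>k\<in>{-int N..int N}. gstar \<nu> (\<delta>*\<theta>) (x + 2 * of_int k * pi))
          \<in> borel_measurable (lebesgue_on {-pi..pi})"
    by (rule continuous_imp_measurable_on_sets_lebesgue)
      (use a in \<open>auto simp: gstar_def intro!: continuous_intros\<close>)
qed

definition phi :: "real \<Rightarrow> real" where "phi t = t / (1 + t)"

lemma phi_nonneg: "t \<ge> 0 \<Longrightarrow> phi t \<ge> 0" by (simp add: phi_def)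

lemma phi_le_1: "t \<ge> 0 \<Longrightarrow> phi t \<le> 1" by (simp add: phi_def)

lemma phi_mono: "0 \<le> t \<Longrightarrow> t \<le> u \<Longrightarrow> phi t \<le> phi u"
  by (simp add: phi_def divide_simps) (simp add: algebra_simps)

lemma phi_lipschitz:
  assumes "0 \<le> t" "t \<le> u"
  shows "phi u - phi t \<le> u - t"
proof -
  have "phi u - phi t = (u - t) / ((1+u)*(1+t))"
    using assms by (simp add: phi_def divide_simps) (simp add: algebra_simps)
  also have "\<dots> \<le> (u - t) / 1"
  proof (rule divide_left_mono)
    have "(1+u)*(1+t) \<ge> 1*1" by (rule mult_mono) (use assms in auto)
    then show "1 \<le> (1+u)*(1+t)" by simp
  qed (use assms in \<open>auto intro!: mult_pos_pos\<close>)
  finally show ?thesis by simp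
qed

lemma adelta_eq_phi:
  "b > 0 \<Longrightarrow> gdelta \<nu> \<delta> \<theta> l \<ge> 0 \<Longrightarrow> adelta \<nu> \<delta> b \<theta> l = phi (2*pi*b*gdelta \<nu> \<delta> \<theta> l)"
  unfolding adelta_def phi_def by (simp add: field_simps)

lemma power_diff_le_on_unit_interval:
  fixes x y :: real
  assumes "0 \<le> y" "y \<le> x" "x \<le> 1"
  shows "x^n - y^n \<le> real n * (x - y)"
proof (induction n)
  case 0 then show ?case by simp
next
  case (Suc n)
  have "x^Suc n - y^Suc n = x * (x^n - y^n) + y^n * (x - y)" by (simp add: algebra_simps)
  also have "x * (x^n - y^n) \<le> 1 * (x^n - y^n)"
    by (rule mult_right_mono) (use assms in \<open>auto intro: power_mono\<close>)
  also have "y^n * (x - y) \<le> 1 * (x - y)"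
    by (rule mult_right_mono) (use assms in \<open>auto intro: power_le_one\<close>)
  finally show ?case using Suc by (simp add: algebra_simps)
qed

lemma adelta_power_pointwise:
  fixes n :: nat
  assumes nu: "\<nu> \<ge> 1/2" and b: "b > 0" and a: "\<delta>*\<theta> > 0" and l: "\<bar>l\<bar> \<le> pi"
  defines "E \<equiv> real n * (2*pi*b*(C_nu \<nu> * (\<delta>*\<theta>) powr (2*\<nu>) * inv_sq_sum))"
  shows "0 \<le> adelta \<nu> \<delta> b \<theta> l ^ n - phi (2*pi*b*gstar \<nu> (\<delta>*\<theta>) l) ^ n"
    and "adelta \<nu> \<delta> b \<theta> l ^ n - phi (2*pi*b*gstar \<nu> (\<delta>*\<theta>) l) ^ n \<le> E"
    and "\<bar>adelta \<nu> \<delta> b \<theta> l ^ n\<bar> \<le> 1"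
proof -
  define g0 where "g0 = gstar \<nu> (\<delta>*\<theta>) l"
  define gd where "gd = gdelta \<nu> \<delta> \<theta> l"
  have g0_nonneg: "g0 \<ge> 0" unfolding g0_def using gstar_nonneg[OF a] nu by auto
  have lo: "g0 \<le> gd" and hi: "gd \<le> g0 + C_nu \<nu> * (\<delta>*\<theta>) powr (2*\<nu>) * inv_sq_sum"
    using gdelta_bounds(2,3)[OF nu a l] by (auto simp: g0_def gd_def)
  have c: "0 \<le> 2*pi*b" using b by simp
  define t where "t = 2*pi*b*g0"
  define u where "u = 2*pi*b*gd"
  have t0: "0 \<le> t" unfolding t_def using g0_nonneg b by simp
  have tu: "t \<le> u" unfolding t_def u_def using mult_left_mono[OF lo c] .
  have ut: "u - t \<le> 2*pi*b*(C_nu \<nu> * (\<delta>*\<theta>) powr (2*\<nu>) * inv_sq_sum)"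
    unfolding t_def u_def using mult_left_mono[OF hi c] by (simp add: algebra_simps)
  have a_eq: "adelta \<nu> \<delta> b \<theta> l = phi u"
    unfolding u_def gd_def using adelta_eq_phi[OF b] g0_nonneg lo by (simp add: gd_def)
  have p_mono: "phi t \<le> phi u" by (rule phi_mono[OF t0 tu])
  have p0: "0 \<le> phi t" by (rule phi_nonneg[OF t0])
  have p1: "phi u \<le> 1" by (rule phi_le_1) (use t0 tu in auto)
  have "phi u ^ n - phi t ^ n \<le> real n * (phi u - phi t)"
    by (rule power_diff_le_on_unit_interval[OF p0 p_mono p1])
  also have "\<dots> \<le> real n * (u - t)" by (rule mult_left_mono[OF phi_lipschitz[OF t0 tu]]) simp
  also have "\<dots> \<le> E" unfolding E_def by (rule mult_left_mono[OF ut]) simp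
  finally show "adelta \<nu> \<delta> b \<theta> l ^ n - phi (2*pi*b*gstar \<nu> (\<delta>*\<theta>) l) ^ n \<le> E"
    by (simp add: a_eq t_def g0_def)
  show "0 \<le> adelta \<nu> \<delta> b \<theta> l ^ n - phi (2*pi*b*gstar \<nu> (\<delta>*\<theta>) l) ^ n"
    using power_mono[OF p_mono p0, of n] by (simp add: a_eq t_def g0_def)
  show "\<bar>adelta \<nu> \<delta> b \<theta> l ^ n\<bar> \<le> 1"
    using p0 p_mono p1 by (simp add: a_eq abs_le_iff power_le_one)
qed

lemma adelta_moment_vs_unperiodised:
  fixes n :: nat
  assumes nu: "\<nu> \<ge> 1/2" and b: "b > 0" and a: "\<delta>*\<theta> > 0"
  shows "\<bar>integral {-pi..pi} (\<lambda>l. adelta \<nu> \<delta> b \<theta> l ^ n)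
            - integral {-pi..pi} (\<lambda>l. phi (2*pi*b*gstar \<nu> (\<delta>*\<theta>) l) ^ n)\<bar>
         \<le> 2*pi*(real n * (2*pi*b*(C_nu \<nu> * (\<delta>*\<theta>) powr (2*\<nu>) * inv_sq_sum)))"
proof -
  define S where "S = {-pi..pi}"
  define E where "E = real n * (2*pi*b*(C_nu \<nu> * (\<delta>*\<theta>) powr (2*\<nu>) * inv_sq_sum))"
  define f where "f = (\<lambda>l. adelta \<nu> \<delta> b \<theta> l ^ n)"
  define g where "g = (\<lambda>l. phi (2*pi*b*gstar \<nu> (\<delta>*\<theta>) l) ^ n)"
  have pt: "0 \<le> f l - g l" "f l - g l \<le> E" "\<bar>f l\<bar> \<le> 1" if "l \<in> S" for l
    using adelta_power_pointwise[OF nu b a, of l n] that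
    by (auto simp: S_def f_def g_def E_def)
  have "f \<in> borel_measurable (lebesgue_on S)"
    unfolding f_def adelta_def S_def
    by (intro borel_measurable_power borel_measurable_divide borel_measurable_add
        borel_measurable_times borel_measurable_const gdelta_measurable[OF nu a])
  then have f_int: "f integrable_on S"
    by (rule measurable_bounded_by_integrable_imp_integrable_real[where g="\<lambda>_. 1"])
       (use pt in \<open>auto simp: S_def\<close>)
  have g_int: "g integrable_on S"
    unfolding S_def g_def phi_def gstar_def
    by (rule integrable_continuous_interval)
       (use a nu C_nu_pos[of \<nu>] b in \<open>auto intro!: continuous_intros simp: add_nonneg_eq_0_iff\<close>)
  have diff_int: "(\<lambda>l. f l - g l) integrable_on S" using f_int g_int by (rule integrable_diff)
  have eq: "integral S f - integral S g = integral S (\<lambda>l. f l - g l)"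
    using integral_diff[OF f_int g_int] by simp
  have "integral S (\<lambda>l. f l - g l) \<ge> 0"
    by (rule integral_nonneg[OF diff_int]) (use pt in auto)
  moreover have "integral S (\<lambda>l. f l - g l) \<le> integral S (\<lambda>l. E)"
    by (rule integral_le[OF diff_int]) (use pt in \<open>auto simp: S_def\<close>)
  moreover have "integral S (\<lambda>l. E) = 2*pi*E" by (simp add: S_def)
  ultimately show ?thesis using eq unfolding S_def f_def g_def E_def by linarith
qed

definition profile :: "real \<Rightarrow> real \<Rightarrow> real \<Rightarrow> real" where
  "profile p \<epsilon> x = 1 / (1 + (\<epsilon>^2 + x^2) powr (p/2))"

lemma profile_zero: "profile p 0 x = 1 / (1 + \<bar>x\<bar> powr p)"
proof (cases "x = 0")
  case True then show ?thesis by (simp add: profile_def)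
next
  case False
  have e: "0^2 + x^2 = \<bar>x\<bar> powr 2" using False by (simp add: powr_realpow)
  have "(0^2 + x^2) powr (p/2) = \<bar>x\<bar> powr p" unfolding e powr_powr by simp
  then show ?thesis by (simp add: profile_def)
qed

(* With s = (K alpha^(2 nu))^(1/p), p = 2 nu + 1, the substitution lambda = s x maps the
   unperiodised filter phi(K alpha^(2 nu) (alpha^2 + lambda^2)^(-(nu + 1/2))) onto the
   profile with eps = alpha / s: the amplitude K alpha^(2 nu) is absorbed by s^p. *)

lemma phi_rescaled:
  fixes \<nu> \<alpha> K s x :: real
  assumes nu: "\<nu> > 0" and a: "\<alpha> > 0" and K: "K > 0"
    and s_def: "s = (K * \<alpha> powr (2*\<nu>)) powr (1/(2*\<nu>+1))"
  shows "phi (K * \<alpha> powr (2*\<nu>) * (\<alpha>^2 + (s*x)^2) powr (-(\<nu>+1/2))) = profile (2*\<nu>+1) (\<alpha>/s) x"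
proof -
  define p where "p = 2*\<nu>+1"
  have p: "p > 0" using nu p_def by simp
  have s: "s > 0" using s_def a K by simp
  have sp: "s powr p = K * \<alpha> powr (2*\<nu>)"
    using a K p by (simp add: s_def p_def[symmetric] powr_powr)
  have "s^2 = s powr 2" using s by (simp add: powr_realpow)
  then have s2: "(s^2) powr (p/2) = s powr p" by (simp add: powr_powr)
  define A where "A = \<alpha>^2 + (s*x)^2"
  have A: "A > 0" unfolding A_def using a by (simp add: add_pos_nonneg)
  have AA: "A / s^2 = (\<alpha>/s)^2 + x^2" unfolding A_def using s by (simp add: field_simps power2_eq_square)
  define m where "m = K * \<alpha> powr (2*\<nu>) * A powr (-(p/2))"
  have m: "m = s powr p / A powr (p/2)" unfolding m_def sp[symmetric] powr_minus divide_inverse ..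
  have m_pos: "m > 0" using m s A by simp
  have inv_m: "1/m = (A/s^2) powr (p/2)"
    using s A by (simp add: m powr_divide s2)
  have "phi m = 1 / (1 + 1/m)" using m_pos unfolding phi_def by (simp add: field_simps)
  also have "\<dots> = profile p (\<alpha>/s) x" unfolding inv_m AA profile_def ..
  moreover have "-(\<nu>+1/2) = -(p/2)" by (simp add: p_def field_simps)
  ultimately show ?thesis unfolding m_def A_def p_def by simp
qed

lemma moment_unperiodised_rescaled:
  fixes \<nu> \<alpha> b s :: real and n :: nat
  assumes nu: "\<nu> > 0" and a: "\<alpha> > 0" and b: "b > 0"
    and s_def: "s = (2*pi*C_nu \<nu>*b * \<alpha> powr (2*\<nu>)) powr (1/(2*\<nu>+1))"
  shows "integral {-pi..pi} (\<lambda>l. phi (2*pi*b*gstar \<nu> \<alpha> l) ^ n)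
        = s * integral {-pi/s..pi/s} (\<lambda>x. profile (2*\<nu>+1) (\<alpha>/s) x ^ n)"
proof -
  define K where "K = 2*pi*C_nu \<nu>*b"
  have K: "K > 0" unfolding K_def using C_nu_pos[OF nu] b by simp
  have s: "s > 0" using s_def[folded K_def] a K by simp
  define F where "F = (\<lambda>l. phi (2*pi*b*gstar \<nu> \<alpha> l) ^ n)"
  have F_rescaled: "F (s*x) = profile (2*\<nu>+1) (\<alpha>/s) x ^ n" for x
  proof -
    have "2*pi*b*gstar \<nu> \<alpha> (s*x) = K * \<alpha> powr (2*\<nu>) * (\<alpha>^2 + (s*x)^2) powr (-(\<nu>+1/2))"
      unfolding gstar_def K_def by (simp add: mult_ac)
    then show ?thesis unfolding F_def using phi_rescaled[OF nu a K s_def[folded K_def], of x] by simp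
  qed
  have "integral ((\<lambda>x. x / s) ` {-pi..pi}) (\<lambda>x. F (s * x)) = (1 / \<bar>s\<bar>) *\<^sub>R integral {-pi..pi} F"
    by (rule integral_stretch_real) (use s in auto)
  then have "integral {-pi/s..pi/s} (\<lambda>x. profile (2*\<nu>+1) (\<alpha>/s) x ^ n) = integral {-pi..pi} F / s"
    using s by (simp add: F_rescaled)
  then show ?thesis using s unfolding F_def by (simp add: field_simps)
qed

lemma adelta_moment_rescaled:
  fixes n :: nat
  assumes nu: "\<nu> \<ge> 1/2" and b: "b > 0" and a: "\<delta>*\<theta> > 0"
    and s_def: "s = (2*pi*C_nu \<nu>*b * (\<delta>*\<theta>) powr (2*\<nu>)) powr (1/(2*\<nu>+1))"
  shows "\<bar>integral {-pi..pi} (\<lambda>l. adelta \<nu> \<delta> b \<theta> l ^ n)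
           - s * integral {-pi/s..pi/s} (\<lambda>x. profile (2*\<nu>+1) (\<delta>*\<theta>/s) x ^ n)\<bar>
         \<le> (2*pi)\<^sup>2 * real n * b * C_nu \<nu> * inv_sq_sum * (\<delta>*\<theta>) powr (2*\<nu>)"
proof -
  have nu0: "\<nu> > 0" using nu by simp
  have moment_eq: "integral {-pi..pi} (\<lambda>l. phi (2*pi*b*gstar \<nu> (\<delta>*\<theta>) l) ^ n)
        = s * integral {-pi/s..pi/s} (\<lambda>x. profile (2*\<nu>+1) (\<delta>*\<theta>/s) x ^ n)"
    by (rule moment_unperiodised_rescaled[OF nu0 a b s_def])
  have error_eq: "2*pi*(real n * (2*pi*b*(C_nu \<nu> * (\<delta>*\<theta>) powr (2*\<nu>) * inv_sq_sum)))
        = (2*pi)\<^sup>2 * real n * b * C_nu \<nu> * inv_sq_sum * (\<delta>*\<theta>) powr (2*\<nu>)"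
    by (simp add: power2_eq_square mult_ac)
  show ?thesis
    using adelta_moment_vs_unperiodised[OF nu b a, of n] unfolding moment_eq error_eq .
qed

lemma one_over_one_plus_antimono: "0 \<le> z \<Longrightarrow> z \<le> w \<Longrightarrow> 1 / (1 + w) \<le> 1 / (1 + (z::real))"
  by (rule divide_left_mono) (auto intro!: mult_pos_pos)

lemma profile_nonneg: "profile p \<epsilon> x \<ge> 0"
  unfolding profile_def by simp

lemma profile_le_1: "profile p \<epsilon> x \<le> 1"
  using one_over_one_plus_antimono[of 0 "(\<epsilon>^2 + x^2) powr (p/2)"] by (simp add: profile_def)

(* Uniform integrable majorant: for p >= 2 and n >= 1 every power h_{p,eps}^n is at most
   2/(1+x^2), since (eps^2 + x^2)^(p/2) >= x^2 when |x| >= 1 and h <= 1 otherwise. *)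

lemma profile_power_majorant:
  fixes n :: nat
  assumes p: "p \<ge> 2" and n: "n \<ge> 1"
  shows "profile p \<epsilon> x ^ n \<le> 2 * inverse (1 + x^2)"
proof -
  have "profile p \<epsilon> x ^ n \<le> profile p \<epsilon> x ^ 1"
    by (rule power_decreasing) (use n profile_nonneg profile_le_1 in auto)
  also have "\<dots> \<le> 2 * inverse (1 + x^2)"
  proof (cases "x^2 \<ge> 1")
    case True
    have "(x^2) powr 1 \<le> (x^2) powr (p/2)" by (rule powr_mono) (use p True in auto)
    also have "\<dots> \<le> (\<epsilon>^2 + x^2) powr (p/2)" by (rule powr_mono2) (use p in auto)
    finally have "x^2 \<le> (\<epsilon>^2 + x^2) powr (p/2)" using True by simp
    then have "profile p \<epsilon> x \<le> 1 / (1 + x^2)"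
      using one_over_one_plus_antimono[of "x^2"] by (simp add: profile_def)
    then have "profile p \<epsilon> x \<le> inverse (1 + x^2)" by (simp add: divide_inverse)
    moreover have "0 \<le> inverse (1 + x^2)" by simp
    ultimately show ?thesis by (simp only: power_one_right)
  next
    case False
    then have "1 + x^2 \<le> 2" "0 < 1 + x^2" by (auto intro: add_pos_nonneg)
    then have "1 \<le> 2 * inverse (1 + x^2)" by (simp add: le_divide_eq divide_inverse[symmetric])
    then show ?thesis using profile_le_1[of p \<epsilon> x] by (simp only: power_one_right)
  qed
  finally show ?thesis .
qed

lemma integrable_majorant: "integrable lborel (\<lambda>x::real. 2 * inverse (1 + x^2))"
  using integrable_inverse_1_plus_square
  unfolding set_integrable_def einterval_eq_UNIV by simp

lemma profile_power_measurable: "(\<lambda>x. profile p \<epsilon> x ^ n) \<in> borel_measurable borel"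
  unfolding profile_def by measurable

lemma profile_power_integrable:
  assumes "p \<ge> 2" "n \<ge> 1"
  shows "integrable lborel (\<lambda>x. profile p \<epsilon> x ^ n)"
  by (rule Bochner_Integration.integrable_bound[OF integrable_majorant])
     (use profile_power_measurable profile_power_majorant[OF assms] profile_nonneg
      in \<open>auto intro!: AE_I2\<close>)

(* The limit integral I_n = int_R h_{p,0}^n is strictly positive: h_{p,0} >= 1/2 on [-1,1]. *)

lemma profile_limit_integral_pos:
  assumes p: "p \<ge> 2" and n: "n \<ge> 1"
  shows "integral UNIV (\<lambda>x. profile p 0 x ^ n) > 0"
proof -
  have int_UNIV: "(\<lambda>x. profile p 0 x ^ n) integrable_on UNIV"
    by (rule integrable_on_lborel[OF profile_power_integrable[OF p n]])
  have int_unit: "(\<lambda>x. profile p 0 x ^ n) integrable_on {-1..1}"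
    by (rule integrable_on_subinterval[OF int_UNIV]) simp
  have low: "(1/2)^n \<le> profile p 0 x ^ n" if "x \<in> {-1..1}" for x
  proof -
    have "x^2 \<le> 1" using that by (auto simp: abs_square_le_1)
    then have "(0^2 + x^2) powr (p/2) \<le> 1" using p by (simp add: powr_le1)
    then have "1/2 \<le> profile p 0 x" unfolding profile_def by (simp add: le_divide_eq add_pos_nonneg)
    then show ?thesis by (rule power_mono) simp
  qed
  have "0 < integral {-1..1} (\<lambda>x::real. (1/2::real)^n)" by simp
  also have "\<dots> \<le> integral {-1..1} (\<lambda>x. profile p 0 x ^ n)"
    by (rule integral_le[OF _ int_unit]) (use low in auto)
  also have "\<dots> \<le> integral UNIV (\<lambda>x. profile p 0 x ^ n)"
    by (rule integral_subset_le[OF _ int_unit int_UNIV]) (auto intro: zero_le_power profile_nonneg)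
  finally show ?thesis .
qed

lemma profile_truncated_integral_at_top:
  fixes \<epsilon> T :: "real \<Rightarrow> real" and n :: nat
  assumes p: "p \<ge> 2" and n: "n \<ge> 1" and eps: "(\<epsilon> \<longlongrightarrow> 0) at_top" and T: "filterlim T at_top at_top"
  shows "((\<lambda>t. integral {-T t..T t} (\<lambda>x. profile p (\<epsilon> t) x ^ n))
           \<longlongrightarrow> integral UNIV (\<lambda>x. profile p 0 x ^ n)) at_top"
proof -
  define f where "f = (\<lambda>t x. indicator {-T t..T t} x * profile p (\<epsilon> t) x ^ n)"
  define f0 where "f0 = (\<lambda>x. profile p 0 x ^ n)"
  have f_meas: "f t \<in> borel_measurable lborel" for t
    unfolding f_def using profile_power_measurable[of p "\<epsilon> t" n] by measurable
  have f_bound: "norm (f t x) \<le> 2 * inverse (1 + x^2)" for t x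
    using profile_power_majorant[OF p n, of "\<epsilon> t" x] profile_nonneg[of p "\<epsilon> t" x]
    by (auto simp: f_def indicator_def)
  have f_lim: "((\<lambda>t. f t x) \<longlongrightarrow> f0 x) at_top" for x
  proof -
    have "\<forall>\<^sub>F t in at_top. f t x = profile p (\<epsilon> t) x ^ n"
      using filterlim_at_top[THEN iffD1, OF T, rule_format, of "\<bar>x\<bar>"]
      by eventually_elim (auto simp: f_def indicator_def)
    moreover have "((\<lambda>t. profile p (\<epsilon> t) x ^ n) \<longlongrightarrow> profile p 0 x ^ n) at_top"
      unfolding profile_def using p
      by (intro tendsto_intros eps) (auto simp: add_nonneg_eq_0_iff)
    ultimately show ?thesis unfolding f0_def by (simp add: tendsto_cong)
  qed
  have lim: "((\<lambda>t. integral\<^sup>L lborel (f t)) \<longlongrightarrow> integral\<^sup>L lborel f0) at_top"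
    by (rule integral_dominated_convergence_at_top[OF _ f_meas integrable_majorant])
       (use f_lim f_bound profile_power_measurable in \<open>auto simp: f0_def\<close>)
  have f_int: "integrable lborel (f t)" for t
    by (rule Bochner_Integration.integrable_bound[OF integrable_majorant f_meas])
       (use f_bound in \<open>auto intro!: AE_I2\<close>)
  have "integral\<^sup>L lborel (f t) = integral {-T t..T t} (\<lambda>x. profile p (\<epsilon> t) x ^ n)" for t
  proof -
    have "integral\<^sup>L lborel (f t) = integral UNIV (f t)"
      using has_integral_integral_lborel[OF f_int[of t]] by (simp add: has_integral_iff)
    also have "\<dots> = integral UNIV (\<lambda>x. if x \<in> {-T t..T t} then profile p (\<epsilon> t) x ^ n else 0)"
      unfolding f_def by (rule arg_cong[where f="integral UNIV"]) (auto simp: indicator_def)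
    also have "\<dots> = integral {-T t..T t} (\<lambda>x. profile p (\<epsilon> t) x ^ n)"
      by (rule integral_restrict_UNIV)
    finally show ?thesis .
  qed
  moreover have "integral\<^sup>L lborel f0 = integral UNIV f0"
    using has_integral_integral_lborel[OF profile_power_integrable[OF p n]]
    by (simp add: has_integral_iff f0_def)
  ultimately show ?thesis using lim unfolding f0_def by simp
qed

lemma profile_truncated_integral_at_right_0:
  fixes \<epsilon> T :: "real \<Rightarrow> real" and n :: nat
  assumes p: "p \<ge> 2" and n: "n \<ge> 1"
    and eps: "(\<epsilon> \<longlongrightarrow> 0) (at_right 0)" and T: "filterlim T at_top (at_right 0)"
  shows "((\<lambda>t. integral {-T t..T t} (\<lambda>x. profile p (\<epsilon> t) x ^ n))
           \<longlongrightarrow> integral UNIV (\<lambda>x. profile p 0 x ^ n)) (at_right 0)"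
  using profile_truncated_integral_at_top[OF p n, of "\<lambda>t. \<epsilon> (inverse t)" "\<lambda>t. T (inverse t)"]
    eps T by (simp add: filterlim_at_right_to_top)

lemma asymp_equiv_by_relative_error:
  fixes A s J e :: "'a \<Rightarrow> real" and I :: real
  assumes J: "(J \<longlongrightarrow> I) F" and I: "I \<noteq> 0"
    and s: "\<forall>\<^sub>F x in F. s x > 0"
    and err: "\<forall>\<^sub>F x in F. \<bar>A x - s x * J x\<bar> \<le> e x"
    and e: "((\<lambda>x. e x / s x) \<longlongrightarrow> 0) F"
  shows "A \<sim>[F] (\<lambda>x. s x * I)"
proof (rule asymp_equivI')
  have rel: "((\<lambda>x. (A x - s x * J x) / (s x * I)) \<longlongrightarrow> 0) F"
  proof (rule Lim_null_comparison)
    show "((\<lambda>x. e x / s x / \<bar>I\<bar>) \<longlongrightarrow> 0) F"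
      using tendsto_divide[OF e tendsto_const[of "\<bar>I\<bar>"]] I by simp
    show "\<forall>\<^sub>F x in F. norm ((A x - s x * J x) / (s x * I)) \<le> e x / s x / \<bar>I\<bar>"
      using s err
    proof eventually_elim
      case (elim x)
      then show ?case using I by (simp add: abs_mult divide_right_mono field_simps)
    qed
  qed
  have "((\<lambda>x. J x / I + (A x - s x * J x) / (s x * I)) \<longlongrightarrow> I / I + 0) F"
    by (intro tendsto_intros J rel) (use I in simp)
  moreover have "\<forall>\<^sub>F x in F. J x / I + (A x - s x * J x) / (s x * I) = A x / (s x * I)"
    using s by eventually_elim (use I in \<open>simp add: field_simps\<close>)
  ultimately show "((\<lambda>x. A x / (s x * I)) \<longlongrightarrow> 1) F"
    using I by (simp add: tendsto_cong)
qed

(* The scale s = (K alpha^(2 nu))^(1/p) behaves like alpha^(2 nu / p), which is larger than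
   both alpha and alpha^(2 nu) as alpha -> 0 because 1 < p. *)

lemma rescaling_powers:
  fixes \<nu> K \<alpha> :: real
  assumes nu: "\<nu> > 0" and K: "K > 0" and a: "\<alpha> > 0"
  defines "p \<equiv> 2*\<nu>+1"
  shows "(K * \<alpha> powr (2*\<nu>)) powr (1/p) = K powr (1/p) * \<alpha> powr (2*\<nu>/p)"
    and "\<alpha> / (K * \<alpha> powr (2*\<nu>)) powr (1/p) = \<alpha> powr (1/p) / K powr (1/p)"
    and "\<alpha> powr (2*\<nu>) / (K * \<alpha> powr (2*\<nu>)) powr (1/p) = \<alpha> powr (2*\<nu> - 2*\<nu>/p) / K powr (1/p)"
proof -
  show s: "(K * \<alpha> powr (2*\<nu>)) powr (1/p) = K powr (1/p) * \<alpha> powr (2*\<nu>/p)"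
    using K a by (simp add: powr_mult powr_powr)
  have "\<alpha> powr (1/p) = \<alpha> powr (1 - 2*\<nu>/p)" using nu by (simp add: p_def field_simps)
  also have "\<dots> = \<alpha> / \<alpha> powr (2*\<nu>/p)" using a by (simp add: powr_diff)
  finally show "\<alpha> / (K * \<alpha> powr (2*\<nu>)) powr (1/p) = \<alpha> powr (1/p) / K powr (1/p)"
    unfolding s using K a by (simp add: field_simps)
  show "\<alpha> powr (2*\<nu>) / (K * \<alpha> powr (2*\<nu>)) powr (1/p) = \<alpha> powr (2*\<nu> - 2*\<nu>/p) / K powr (1/p)"
    unfolding s using K a by (simp add: powr_diff field_simps)
qed

lemma powr_tendsto_0_at_right:
  fixes e \<theta> :: real
  assumes e: "e > 0" and th: "\<theta> > 0"
  shows "((\<lambda>\<delta>. (\<delta>*\<theta>) powr e) \<longlongrightarrow> 0) (at_right 0)"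
proof -
  have "((\<lambda>\<delta>::real. \<delta>*\<theta>) \<longlongrightarrow> 0*\<theta>) (at_right 0)" by (intro tendsto_intros)
  moreover have "\<forall>\<^sub>F \<delta> in at_right 0. 0 \<le> \<delta>*\<theta>"
    using eventually_at_right_less[of "0::real"] by eventually_elim (use th in auto)
  ultimately show ?thesis by (intro tendsto_zero_powrI[OF _ tendsto_const _ e]) simp_all
qed

lemma rescaling_limits:
  fixes \<nu> K \<theta> :: real and s :: "real \<Rightarrow> real"
  assumes nu: "\<nu> > 0" and K: "K > 0" and th: "\<theta> > 0"
    and s_def: "\<And>\<delta>. s \<delta> = (K * (\<delta>*\<theta>) powr (2*\<nu>)) powr (1/(2*\<nu>+1))"
  shows "\<forall>\<^sub>F \<delta> in at_right 0. s \<delta> > 0"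
    and "filterlim (\<lambda>\<delta>. pi / s \<delta>) at_top (at_right 0)"
    and "((\<lambda>\<delta>. \<delta>*\<theta> / s \<delta>) \<longlongrightarrow> 0) (at_right 0)"
    and "((\<lambda>\<delta>. (\<delta>*\<theta>) powr (2*\<nu>) / s \<delta>) \<longlongrightarrow> 0) (at_right 0)"
proof -
  define p where "p = 2*\<nu>+1"
  have p: "p > 1" using nu by (simp add: p_def)
  have pos: "\<forall>\<^sub>F \<delta> in at_right 0. \<delta>*\<theta> > 0"
    using eventually_at_right_less[of "0::real"] by eventually_elim (use th in simp)
  have s_eq: "s \<delta> = K powr (1/p) * (\<delta>*\<theta>) powr (2*\<nu>/p)"
    and eps_eq: "\<delta>*\<theta> / s \<delta> = (\<delta>*\<theta>) powr (1/p) / K powr (1/p)"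
    and err_eq: "(\<delta>*\<theta>) powr (2*\<nu>) / s \<delta> = (\<delta>*\<theta>) powr (2*\<nu> - 2*\<nu>/p) / K powr (1/p)"
    if "\<delta>*\<theta> > 0" for \<delta>
    unfolding s_def p_def by (fact rescaling_powers[OF nu K that])+
  show s_pos: "\<forall>\<^sub>F \<delta> in at_right 0. s \<delta> > 0"
    using pos by eventually_elim (use K in \<open>auto simp: s_def\<close>)
  have "((\<lambda>\<delta>. K powr (1/p) * (\<delta>*\<theta>) powr (2*\<nu>/p)) \<longlongrightarrow> K powr (1/p) * 0) (at_right 0)"
    by (intro tendsto_mult tendsto_const powr_tendsto_0_at_right) (use nu p th in auto)
  moreover have "\<forall>\<^sub>F \<delta> in at_right 0. K powr (1/p) * (\<delta>*\<theta>) powr (2*\<nu>/p) = s \<delta>"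
    using pos by eventually_elim (simp add: s_eq)
  ultimately have s_lim: "(s \<longlongrightarrow> 0) (at_right 0)" by (simp add: tendsto_cong)
  show "filterlim (\<lambda>\<delta>. pi / s \<delta>) at_top (at_right 0)"
    by (rule LIM_at_top_divide[OF tendsto_const _ s_lim]) (use s_pos in auto)
  have "((\<lambda>\<delta>. (\<delta>*\<theta>) powr (1/p) / K powr (1/p)) \<longlongrightarrow> 0 / K powr (1/p)) (at_right 0)"
    by (intro tendsto_divide tendsto_const powr_tendsto_0_at_right) (use K p th in auto)
  moreover have "\<forall>\<^sub>F \<delta> in at_right 0. (\<delta>*\<theta>) powr (1/p) / K powr (1/p) = \<delta>*\<theta> / s \<delta>"
    using pos by eventually_elim (simp add: eps_eq)
  ultimately show "((\<lambda>\<delta>. \<delta>*\<theta> / s \<delta>) \<longlongrightarrow> 0) (at_right 0)" by (simp add: tendsto_cong)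
  have "2*\<nu>/p < 2*\<nu>" using p nu by (simp add: divide_less_eq)
  then have "((\<lambda>\<delta>. (\<delta>*\<theta>) powr (2*\<nu> - 2*\<nu>/p) / K powr (1/p)) \<longlongrightarrow> 0 / K powr (1/p)) (at_right 0)"
    by (intro tendsto_divide tendsto_const powr_tendsto_0_at_right) (use K th in auto)
  moreover have "\<forall>\<^sub>F \<delta> in at_right 0.
      (\<delta>*\<theta>) powr (2*\<nu> - 2*\<nu>/p) / K powr (1/p) = (\<delta>*\<theta>) powr (2*\<nu>) / s \<delta>"
    using pos by eventually_elim (simp add: err_eq)
  ultimately show "((\<lambda>\<delta>. (\<delta>*\<theta>) powr (2*\<nu>) / s \<delta>) \<longlongrightarrow> 0) (at_right 0)" by (simp add: tendsto_cong)
qed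

lemma adelta_moment_asymp:
  fixes \<nu> b \<theta> :: real and n :: nat
  assumes nu: "\<nu> \<ge> 1/2" and b: "b > 0" and th: "\<theta> > 0" and n: "n \<ge> 1"
  shows "(\<lambda>\<delta>. integral {-pi..pi} (\<lambda>l. adelta \<nu> \<delta> b \<theta> l ^ n)) \<sim>[at_right 0]
         (\<lambda>\<delta>. (\<delta>*\<theta>) powr (2*\<nu>/(2*\<nu>+1)) * (2*pi*C_nu \<nu> * b) powr (1/(2*\<nu>+1))
               * integral UNIV (\<lambda>x. profile (2*\<nu>+1) 0 x ^ n))"
proof -
  define p where "p = 2*\<nu>+1"
  define K where "K = 2*pi*C_nu \<nu> * b"
  define I where "I = integral UNIV (\<lambda>x. profile p 0 x ^ n)"
  define s where "s = (\<lambda>\<delta>. (K * (\<delta>*\<theta>) powr (2*\<nu>)) powr (1/p))"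
  define c where "c = (2*pi)\<^sup>2 * real n * b * C_nu \<nu> * inv_sq_sum"
  have nu0: "\<nu> > 0" and p2: "p \<ge> 2" using nu by (auto simp: p_def)
  have K: "K > 0" unfolding K_def using C_nu_pos[OF nu0] b by simp
  have limits: "\<forall>\<^sub>F \<delta> in at_right 0. s \<delta> > 0"
      "filterlim (\<lambda>\<delta>. pi / s \<delta>) at_top (at_right 0)"
      "((\<lambda>\<delta>. \<delta>*\<theta> / s \<delta>) \<longlongrightarrow> 0) (at_right 0)"
      "((\<lambda>\<delta>. (\<delta>*\<theta>) powr (2*\<nu>) / s \<delta>) \<longlongrightarrow> 0) (at_right 0)"
    by (rule rescaling_limits[OF nu0 K th]; simp add: s_def p_def)+
  have pos: "\<forall>\<^sub>F \<delta> in at_right 0. \<delta>*\<theta> > 0"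
    using eventually_at_right_less[of "0::real"] by eventually_elim (use th in simp)
  have J: "((\<lambda>\<delta>. integral {-(pi/s \<delta>)..pi/s \<delta>} (\<lambda>x. profile p (\<delta>*\<theta>/s \<delta>) x ^ n)) \<longlongrightarrow> I)
             (at_right 0)"
    unfolding I_def by (rule profile_truncated_integral_at_right_0[OF p2 n limits(3,2)])
  have I: "I \<noteq> 0" using profile_limit_integral_pos[OF p2 n] by (simp add: I_def)
  have err: "\<forall>\<^sub>F \<delta> in at_right 0.
      \<bar>integral {-pi..pi} (\<lambda>l. adelta \<nu> \<delta> b \<theta> l ^ n)
        - s \<delta> * integral {-(pi/s \<delta>)..pi/s \<delta>} (\<lambda>x. profile p (\<delta>*\<theta>/s \<delta>) x ^ n)\<bar>
      \<le> c * (\<delta>*\<theta>) powr (2*\<nu>)"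
    using pos by eventually_elim
      (use adelta_moment_rescaled[OF nu b, of \<delta> \<theta> "s \<delta>" n for \<delta>] in
        \<open>simp add: s_def K_def p_def c_def mult_ac\<close>)
  have e: "((\<lambda>\<delta>. c * (\<delta>*\<theta>) powr (2*\<nu>) / s \<delta>) \<longlongrightarrow> 0) (at_right 0)"
    using tendsto_mult[OF tendsto_const[of c] limits(4)] by simp
  have "(\<lambda>\<delta>. integral {-pi..pi} (\<lambda>l. adelta \<nu> \<delta> b \<theta> l ^ n)) \<sim>[at_right 0] (\<lambda>\<delta>. s \<delta> * I)"
    by (rule asymp_equiv_by_relative_error[OF J I limits(1) err]) (use e in \<open>simp add: mult.assoc\<close>)
  also have "\<forall>\<^sub>F \<delta> in at_right 0. s \<delta> * I = (\<delta>*\<theta>) powr (2*\<nu>/p) * K powr (1/p) * I"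
    using pos by eventually_elim (simp add: s_def p_def rescaling_powers(1)[OF nu0 K])
  then have "(\<lambda>\<delta>. s \<delta> * I) \<sim>[at_right 0] (\<lambda>\<delta>. (\<delta>*\<theta>) powr (2*\<nu>/p) * K powr (1/p) * I)"
    by (rule asymp_equiv_refl_ev)
  finally show ?thesis unfolding p_def K_def I_def .
qed

theorem lemma5p4:
  fixes \<nu> b \<theta> :: real
  assumes "\<nu> \<ge> 1/2" and "b > 0" and "\<theta> > 0"
  shows "((\<lambda>\<delta>. integral {-pi..pi} (\<lambda>l. adelta \<nu> \<delta> b \<theta> l)) \<sim>[at_right 0]
           (\<lambda>\<delta>. (\<delta>*\<theta>) powr (2*\<nu>/(2*\<nu>+1)) * (2*pi*C_nu \<nu> * b) powr (1/(2*\<nu>+1))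
                 * integral UNIV (\<lambda>x::real. 1 / (1 + \<bar>x\<bar> powr (2*\<nu>+1))))) \<and>
         ((\<lambda>\<delta>. integral {-pi..pi} (\<lambda>l. (adelta \<nu> \<delta> b \<theta> l)^2)) \<sim>[at_right 0]
           (\<lambda>\<delta>. (\<delta>*\<theta>) powr (2*\<nu>/(2*\<nu>+1)) * (2*pi*C_nu \<nu> * b) powr (1/(2*\<nu>+1))
                 * integral UNIV (\<lambda>x::real. 1 / (1 + \<bar>x\<bar> powr (2*\<nu>+1))^2)))"
  using adelta_moment_asymp[OF assms, of 1] adelta_moment_asymp[OF assms, of 2]
  by (simp add: profile_zero power_one_over)

end
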